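(* Let $R$ be an almost Dedekind domain. Then $\mathrm{Crit}_\alpha(R)\subseteq\partial^\alpha(\mathcal{M})$ for every ordinal $\alpha$.
   Context: $R$ almost Dedekind: $R_M$ is a DVR for each maximal $M$; $K$ quotient field. $\mathcal{M}$ is $\mathrm{Max}(R)$ with the inverse topology (restriction of the coarsest topology on $\mathrm{Spec}(R)$ in which Zariski-open Zariski-compact sets are closed). For a space $X$: $\partial^0(X)=X$, $\partial^{\gamma+1}(X)$ is the set of non-isolated points of $\partial^\gamma(X)$ (subspace topology), $\partial^\lambda(X)=\bigcap_{\beta<\lambda}\partial^\beta(X)$ for limit $\lambda$. A maximal ideal $M$ of an almost Dedekind domain $A$ is critical if every finitely generated ideal $J\subseteq M$ satisfies $J\subseteq N^2$ for some maximal $N$; $\mathrm{Crit}(A)$ is the set of these. Recursively: $\mathrm{Crit}_0(R)=\mathrm{Max}(R)$, $T_0=R$; $\mathrm{Crit}_{\gamma+1}(R)=\{P\in\mathrm{Max}(R)\mid PT_\gamma\in\mathrm{Crit}(T_\gamma)\}$; $\mathrm{Crit}_\lambda(R)=\bigcap_{\gamma<\lambda}\mathrm{Crit}_\gamma(R)$ for limit $\lambda$; $T_\alpha=\bigcap\{R_P\mid P\in\mathrm{Crit}_\alpha(R)\}$ ($=K$ if empty). *)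

theory Defs
  imports "HOL-Analysis.Analysis"
begin

text \<open>All rings are subrings of a fixed field 'k (the quotient field K of R).\<close>

definition subring_of :: "'k::field set \<Rightarrow> bool" where
  "subring_of A \<longleftrightarrow> 0 \<in> A \<and> 1 \<in> A \<and>
     (\<forall>x\<in>A. \<forall>y\<in>A. x + y \<in> A \<and> x - y \<in> A \<and> x * y \<in> A)"

definition ideal_of :: "'k::field set \<Rightarrow> 'k set \<Rightarrow> bool" where
  "ideal_of A I \<longleftrightarrow> I \<subseteq> A \<and> 0 \<in> I \<and> (\<forall>x\<in>I. \<forall>y\<in>I. x + y \<in> I) \<and>
     (\<forall>a\<in>A. \<forall>x\<in>I. a * x \<in> I)"

definition prime_ideal_of :: "'k::field set \<Rightarrow> 'k set \<Rightarrow> bool" where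
  "prime_ideal_of A P \<longleftrightarrow> ideal_of A P \<and> P \<noteq> A \<and>
     (\<forall>x\<in>A. \<forall>y\<in>A. x * y \<in> P \<longrightarrow> x \<in> P \<or> y \<in> P)"

definition maximal_ideal_of :: "'k::field set \<Rightarrow> 'k set \<Rightarrow> bool" where
  "maximal_ideal_of A M \<longleftrightarrow> ideal_of A M \<and> M \<noteq> A \<and>
     (\<forall>J. ideal_of A J \<and> M \<subseteq> J \<longrightarrow> J = M \<or> J = A)"

definition Spec :: "'k::field set \<Rightarrow> 'k set set" where
  "Spec A = {P. prime_ideal_of A P}"

definition MaxSpec :: "'k::field set \<Rightarrow> 'k set set" where
  "MaxSpec A = {M. maximal_ideal_of A M}"

definition gen_ideal :: "'k::field set \<Rightarrow> 'k set \<Rightarrow> 'k set" where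
  "gen_ideal A S = {x. \<exists>G c. finite G \<and> G \<subseteq> S \<and> (\<forall>g\<in>G. c g \<in> A) \<and> x = (\<Sum>g\<in>G. c g * g)}"

definition fin_gen_ideal_of :: "'k::field set \<Rightarrow> 'k set \<Rightarrow> bool" where
  "fin_gen_ideal_of A J \<longleftrightarrow> (\<exists>G. finite G \<and> G \<subseteq> A \<and> J = gen_ideal A G)"

definition ideal_square :: "'k::field set \<Rightarrow> 'k set \<Rightarrow> 'k set" where
  "ideal_square A N = gen_ideal A {x * y | x y. x \<in> N \<and> y \<in> N}"

definition localization :: "'k::field set \<Rightarrow> 'k set \<Rightarrow> 'k set" where
  "localization A P = {a / b | a b. a \<in> A \<and> b \<in> A \<and> b \<notin> P}"

definition is_DVR :: "'k::field set \<Rightarrow> bool" where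
  "is_DVR D \<longleftrightarrow> subring_of D \<and>
     (\<forall>I. ideal_of D I \<longrightarrow> (\<exists>a\<in>D. I = {a * x | x. x \<in> D})) \<and>
     (\<exists>!M. maximal_ideal_of D M) \<and>
     \<not> (\<forall>x\<in>D. x \<noteq> 0 \<longrightarrow> inverse x \<in> D)"

definition almost_Dedekind :: "'k::field set \<Rightarrow> bool" where
  "almost_Dedekind A \<longleftrightarrow> subring_of A \<and> (\<forall>M \<in> MaxSpec A. is_DVR (localization A M))"

definition is_quotient_field_of :: "'k::field set \<Rightarrow> bool" where
  "is_quotient_field_of A \<longleftrightarrow> (\<forall>x. \<exists>a b. a \<in> A \<and> b \<in> A \<and> b \<noteq> 0 \<and> x = a / b)"

definition Crit :: "'k::field set \<Rightarrow> 'k set set" where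
  "Crit A = {M \<in> MaxSpec A. \<forall>J. fin_gen_ideal_of A J \<and> J \<subseteq> M \<longrightarrow>
                 (\<exists>N \<in> MaxSpec A. J \<subseteq> ideal_square A N)}"

definition zariski :: "'k::field set \<Rightarrow> 'k set topology" where
  "zariski A = topology_generated_by
     (insert (Spec A) {{P \<in> Spec A. f \<notin> P} | f. f \<in> A})"

definition inverse_topology :: "'k::field set \<Rightarrow> 'k set topology" where
  "inverse_topology A = topology_generated_by
     (insert (Spec A) {Spec A - U | U. openin (zariski A) U \<and> compactin (zariski A) U})"

text \<open>The space M = Max(A) with the (restriction of the) inverse topology.\<close>
definition max_inv :: "'k::field set \<Rightarrow> 'k set topology" where
  "max_inv A = subtopology (inverse_topology A) (MaxSpec A)"

text \<open>Transfinite recursion over a well-order 'o (ordinals): value base at the least element,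
  step at successors, intersection at limits.\<close>
definition transfinite :: "'s set \<Rightarrow> ('s set \<Rightarrow> 's set) \<Rightarrow> 'o::wellorder \<Rightarrow> 's set" where
  "transfinite base step = wfrec {(x, y). x < y} (\<lambda>F a.
     if (\<forall>b. \<not> b < a) then base
     else if (\<exists>b. b < a \<and> (\<forall>c. \<not> (b < c \<and> c < a)))
       then step (F (THE b. b < a \<and> (\<forall>c. \<not> (b < c \<and> c < a))))
     else (\<Inter>b \<in> {b. b < a}. F b))"

definition CB_deriv :: "'a topology \<Rightarrow> 'o::wellorder \<Rightarrow> 'a set" where
  "CB_deriv X = transfinite (topspace X)
     (\<lambda>S. subtopology X S derived_set_of topspace (subtopology X S))"

text \<open>T for a set C of maximal ideals of R: intersection of the R_P, P in C (= K if C empty).\<close>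
definition T_of :: "'k::field set \<Rightarrow> 'k set set \<Rightarrow> 'k set" where
  "T_of R C = (\<Inter>P \<in> C. localization R P)"

definition Crit_seq :: "'k::field set \<Rightarrow> 'o::wellorder \<Rightarrow> 'k set set" where
  "Crit_seq R = transfinite (MaxSpec R)
     (\<lambda>C. {P \<in> MaxSpec R. gen_ideal (T_of R C) P \<in> Crit (T_of R C)})"

definition T_seq :: "'k::field set \<Rightarrow> 'o::wellorder \<Rightarrow> 'k set" where
  "T_seq R \<alpha> = T_of R (Crit_seq R \<alpha>)"

end

theory Submission
  imports Defs
begin

(* By transfinite induction, Crit_a lies in the a-th derivative and is closed in the inverse
   topology: every maximal ideal outside it has a neighbourhood {Q. F \<subseteq> Q}, F finite, disjoint
   from it. Limit stages are immediate.
   For the successor step let C = Crit_a and T the intersection of the R_Q, Q \<in> C. Nonzero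
   finitely generated ideals H of an almost Dedekind domain are invertible, so x lies in an ideal
   I of T as soon as x H\<inverse> H \<subseteq> I. For a uniformizer t of P \<in> C this yields
   PT = {x \<in> T. x / t \<in> R_P}, hence PT is maximal and t \<notin> (PT)\<^sup>2.
   If P \<notin> C, a finite F \<subseteq> P contained in no Q \<in> C gives (F, t)\<inverse> \<subseteq> T and hence PT = T; so
   Crit_(a+1) \<subseteq> C. If P \<in> Crit_(a+1) had a neighbourhood {Q. F \<subseteq> Q} meeting C only in P, the
   same argument would give P \<subseteq> (F, t)T \<subseteq> PT, and criticality of PT would put t into (PT)\<^sup>2;
   so P is a limit point of C, which lies in the a-th derivative. Finally, a finitely generated
   witness that PT is not critical involves only finitely many elements of P, which makes
   Crit_(a+1) closed. *)

section \<open>Ideals of subrings of a field\<close>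

lemma subring_0: "subring_of A \<Longrightarrow> 0 \<in> A"
  and subring_1: "subring_of A \<Longrightarrow> 1 \<in> A"
  and subring_add: "subring_of A \<Longrightarrow> x \<in> A \<Longrightarrow> y \<in> A \<Longrightarrow> x + y \<in> A"
  and subring_diff: "subring_of A \<Longrightarrow> x \<in> A \<Longrightarrow> y \<in> A \<Longrightarrow> x - y \<in> A"
  and subring_mult: "subring_of A \<Longrightarrow> x \<in> A \<Longrightarrow> y \<in> A \<Longrightarrow> x * y \<in> A"
  by (simp_all add: subring_of_def)

lemma subring_prod:
  assumes "subring_of A" "finite G" "\<And>g. g \<in> G \<Longrightarrow> f g \<in> A"
  shows "prod f G \<in> A"
  using assms(2,3) by (induction G rule: finite_induct) (auto intro: subring_1 subring_mult assms(1))

lemma ideal_ofD: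
  assumes "ideal_of A I"
  shows ideal_of_subset: "I \<subseteq> A"
    and ideal_of_0: "0 \<in> I"
    and ideal_of_add: "x \<in> I \<Longrightarrow> y \<in> I \<Longrightarrow> x + y \<in> I"
    and ideal_of_mult: "a \<in> A \<Longrightarrow> x \<in> I \<Longrightarrow> a * x \<in> I"
  using assms unfolding ideal_of_def by auto

lemma ideal_of_sum:
  assumes "ideal_of A I" "finite G" "\<And>g. g \<in> G \<Longrightarrow> f g \<in> I"
  shows "sum f G \<in> I"
  using assms(2,3) by (induction G rule: finite_induct) (auto intro: ideal_of_0 ideal_of_add assms(1))

lemma ideal_of_eq_if_one:
  assumes I: "ideal_of A I" and one: "1 \<in> I"
  shows "I = A"
  using ideal_of_subset[OF I] ideal_of_mult[OF I _ one] by force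

lemma gen_ideal_least:
  assumes "0 \<in> I" "\<And>x y. x \<in> I \<Longrightarrow> y \<in> I \<Longrightarrow> x + y \<in> I"
    "\<And>a x. a \<in> A \<Longrightarrow> x \<in> I \<Longrightarrow> a * x \<in> I" "S \<subseteq> I"
  shows "gen_ideal A S \<subseteq> I"
proof
  fix x assume "x \<in> gen_ideal A S"
  then obtain G c where G: "finite G" "G \<subseteq> S" "\<forall>g\<in>G. c g \<in> A" and x: "x = (\<Sum>g\<in>G. c g * g)"
    unfolding gen_ideal_def by blast
  have "(\<Sum>g\<in>G. c g * g) \<in> I"
    using G by (induction G rule: finite_induct) (use assms in auto)
  then show "x \<in> I" using x by simp
qed

lemma gen_ideal_minimal: "ideal_of A I \<Longrightarrow> S \<subseteq> I \<Longrightarrow> gen_ideal A S \<subseteq> I"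
  by (rule gen_ideal_least) (auto intro: ideal_of_0 ideal_of_add ideal_of_mult)

lemma gen_ideal_mono: "S \<subseteq> S' \<Longrightarrow> gen_ideal A S \<subseteq> gen_ideal A S'"
  unfolding gen_ideal_def by blast

lemma gen_ideal_base: "subring_of A \<Longrightarrow> S \<subseteq> gen_ideal A S"
  unfolding gen_ideal_def
  by (intro subsetI CollectI exI[of _ "{s}" for s] exI[of _ "\<lambda>_. 1"]) (simp add: subring_1)

lemma gen_ideal_0: "0 \<in> gen_ideal A S"
  unfolding gen_ideal_def by (intro CollectI exI[of _ "{}"]) simp

lemma gen_ideal_add:
  assumes A: "subring_of A" and x: "x \<in> gen_ideal A S" and y: "y \<in> gen_ideal A S"
  shows "x + y \<in> gen_ideal A S"
proof -
  obtain G c where G: "finite G" "G \<subseteq> S" "\<forall>g\<in>G. c g \<in> A" "x = (\<Sum>g\<in>G. c g * g)"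
    using x unfolding gen_ideal_def by blast
  obtain H d where H: "finite H" "H \<subseteq> S" "\<forall>g\<in>H. d g \<in> A" "y = (\<Sum>g\<in>H. d g * g)"
    using y unfolding gen_ideal_def by blast
  define e where "e g = (if g \<in> G then c g else 0) + (if g \<in> H then d g else 0)" for g
  have "(\<Sum>g\<in>G \<union> H. (if g \<in> G then c g else 0) * g) = x"
    by (subst sum.mono_neutral_cong_right) (use G H in auto)
  moreover have "(\<Sum>g\<in>G \<union> H. (if g \<in> H then d g else 0) * g) = y"
    by (subst sum.mono_neutral_cong_right) (use G H in auto)
  ultimately have "x + y = (\<Sum>g\<in>G \<union> H. e g * g)"
    unfolding e_def distrib_right sum.distrib by simp
  moreover have "\<forall>g\<in>G \<union> H. e g \<in> A"
    using G(3) H(3) unfolding e_def by (auto intro: subring_add subring_0 A)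
  ultimately show ?thesis
    unfolding gen_ideal_def using G H by (intro CollectI exI[of _ "G \<union> H"] exI[of _ e]) simp
qed

lemma gen_ideal_mult:
  assumes A: "subring_of A" and a: "a \<in> A" and x: "x \<in> gen_ideal A S"
  shows "a * x \<in> gen_ideal A S"
proof -
  obtain G c where G: "finite G" "G \<subseteq> S" "\<forall>g\<in>G. c g \<in> A" "x = (\<Sum>g\<in>G. c g * g)"
    using x unfolding gen_ideal_def by blast
  have "a * x = (\<Sum>g\<in>G. (a * c g) * g)"
    using G(4) by (simp add: sum_distrib_left mult.assoc)
  moreover have "\<forall>g\<in>G. a * c g \<in> A"
    using G(3) by (auto intro: subring_mult A a)
  ultimately show ?thesis
    unfolding gen_ideal_def using G by (intro CollectI exI[of _ G] exI[of _ "\<lambda>g. a * c g"]) simp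
qed

lemma gen_ideal_ideal: "subring_of A \<Longrightarrow> S \<subseteq> A \<Longrightarrow> ideal_of A (gen_ideal A S)"
  unfolding ideal_of_def
  by (intro conjI ballI gen_ideal_0 gen_ideal_add gen_ideal_mult gen_ideal_least)
    (auto intro: subring_0 subring_add subring_mult)

lemma ideal_square_subset: "ideal_of A N \<Longrightarrow> ideal_square A N \<subseteq> N"
  unfolding ideal_square_def by (rule gen_ideal_minimal) (auto intro: ideal_of_mult dest: ideal_of_subset)

lemma fin_gen_subset_gen_ideal:
  assumes A: "subring_of A" and J: "fin_gen_ideal_of A J" "J \<subseteq> gen_ideal A S"
  shows "\<exists>F. finite F \<and> F \<subseteq> S \<and> J \<subseteq> gen_ideal A F"
proof -
  obtain G where G: "finite G" "G \<subseteq> A" "J = gen_ideal A G"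
    using J(1) unfolding fin_gen_ideal_of_def by blast
  have "\<forall>g\<in>G. \<exists>F. finite F \<and> F \<subseteq> S \<and> g \<in> gen_ideal A F"
  proof
    fix g assume "g \<in> G"
    then have "g \<in> gen_ideal A S" using gen_ideal_base[OF A] G(3) J(2) by blast
    then obtain F c where "finite F" "F \<subseteq> S" "\<forall>f\<in>F. c f \<in> A" "g = (\<Sum>f\<in>F. c f * f)"
      unfolding gen_ideal_def by blast
    then show "\<exists>F. finite F \<and> F \<subseteq> S \<and> g \<in> gen_ideal A F"
      unfolding gen_ideal_def by blast
  qed
  then obtain F where F: "\<And>g. g \<in> G \<Longrightarrow> finite (F g) \<and> F g \<subseteq> S \<and> g \<in> gen_ideal A (F g)"
    by metis
  have G_sub: "G \<subseteq> gen_ideal A (\<Union>g\<in>G. F g)"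
    using F gen_ideal_mono[of "F g" "\<Union>g\<in>G. F g" A for g] by blast
  have "J \<subseteq> gen_ideal A (\<Union>g\<in>G. F g)"
    unfolding G(3) by (intro gen_ideal_least gen_ideal_0 gen_ideal_add gen_ideal_mult A G_sub)
  then show ?thesis using F G(1) by (intro exI[of _ "\<Union>g\<in>G. F g"]) auto
qed

lemma maximal_ideal_comax:
  assumes R: "subring_of R" and M: "maximal_ideal_of R M" and a: "a \<in> R" "a \<notin> M"
  shows "\<exists>m\<in>M. \<exists>r\<in>R. 1 = m + r * a"
proof -
  have Mi: "ideal_of R M" using M unfolding maximal_ideal_of_def by blast
  have aM: "insert a M \<subseteq> R" using ideal_of_subset[OF Mi] a(1) by blast
  have "ideal_of R (gen_ideal R (insert a M))" "M \<subseteq> gen_ideal R (insert a M)"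
    "gen_ideal R (insert a M) \<noteq> M"
    using gen_ideal_ideal[OF R aM] gen_ideal_base[OF R, of "insert a M"] a(2) by auto
  then have "gen_ideal R (insert a M) = R"
    using M unfolding maximal_ideal_of_def by blast
  then have "1 \<in> gen_ideal R (insert a M)" using subring_1[OF R] by simp
  then obtain G c where G: "finite G" "G \<subseteq> insert a M" "\<forall>g\<in>G. c g \<in> R"
    and one: "1 = (\<Sum>g\<in>G. c g * g)"
    unfolding gen_ideal_def by blast
  define r where "r = (if a \<in> G then c a else 0)"
  have "1 = (\<Sum>g\<in>G - {a}. c g * g) + r * a"
  proof (cases "a \<in> G")
    case True
    then show ?thesis
      using one sum.remove[OF G(1) True, of "\<lambda>g. c g * g"] unfolding r_def by (simp add: add.commute)
  next
    case False
    then show ?thesis using one unfolding r_def by simp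
  qed
  moreover have "(\<Sum>g\<in>G - {a}. c g * g) \<in> M"
    using G by (intro ideal_of_sum[OF Mi]) (auto intro: ideal_of_mult[OF Mi])
  moreover have "r \<in> R"
    unfolding r_def using G(3) subring_0[OF R] by auto
  ultimately show ?thesis by blast
qed

lemma maximal_imp_prime:
  assumes R: "subring_of R" and M: "maximal_ideal_of R M"
  shows "prime_ideal_of R M"
proof -
  have Mi: "ideal_of R M" and "M \<noteq> R" using M unfolding maximal_ideal_of_def by auto
  moreover have "y \<in> M"
    if x: "x \<in> R" and y: "y \<in> R" and xy: "x * y \<in> M" and "x \<notin> M" for x y
  proof -
    obtain m r where mr: "m \<in> M" "r \<in> R" "1 = m + r * x"
      using maximal_ideal_comax[OF R M x \<open>x \<notin> M\<close>] by blast
    then have "y = y * m + r * (x * y)"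
      by (metis distrib_left mult.commute mult.left_commute mult.right_neutral)
    moreover have "y * m \<in> M" "r * (x * y) \<in> M"
      using ideal_of_mult[OF Mi] y xy mr by blast+
    ultimately show "y \<in> M" using ideal_of_add[OF Mi] by metis
  qed
  ultimately show ?thesis unfolding prime_ideal_of_def by blast
qed

lemma MaxSpec_subset_Spec: "subring_of R \<Longrightarrow> MaxSpec R \<subseteq> Spec R"
  unfolding MaxSpec_def Spec_def using maximal_imp_prime by blast

lemma prime_ideal_ofD:
  assumes "prime_ideal_of R P"
  shows prime_ideal_of_ideal: "ideal_of R P"
    and prime_ideal_of_1: "1 \<notin> P"
    and prime_ideal_of_mult: "x \<in> R \<Longrightarrow> y \<in> R \<Longrightarrow> x \<notin> P \<Longrightarrow> y \<notin> P \<Longrightarrow> x * y \<notin> P"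
  using assms ideal_of_eq_if_one unfolding prime_ideal_of_def by blast+

lemma ideal_of_Union_chain:
  assumes "\<C> \<noteq> {}" "\<And>I. I \<in> \<C> \<Longrightarrow> ideal_of A I" "\<And>X Y. X \<in> \<C> \<Longrightarrow> Y \<in> \<C> \<Longrightarrow> X \<subseteq> Y \<or> Y \<subseteq> X"
  shows "ideal_of A (\<Union>\<C>)"
  unfolding ideal_of_def
proof (intro conjI ballI)
  show "\<Union>\<C> \<subseteq> A" "0 \<in> \<Union>\<C>" using assms(1,2) ideal_ofD by blast+
  show "a * x \<in> \<Union>\<C>" if "a \<in> A" "x \<in> \<Union>\<C>" for a x
    using that assms(2) ideal_of_mult by blast
  fix x y assume "x \<in> \<Union>\<C>" "y \<in> \<Union>\<C>"
  then obtain X Y where XY: "X \<in> \<C>" "Y \<in> \<C>" "x \<in> X" "y \<in> Y" by blast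
  with assms(3) consider "X \<subseteq> Y" | "Y \<subseteq> X" by blast
  then show "x + y \<in> \<Union>\<C>"
    by cases (use XY assms(2) ideal_of_add in blast)+
qed

lemma exists_maximal_ideal:
  assumes R: "subring_of R" and I: "ideal_of R I" and one: "1 \<notin> I"
  shows "\<exists>M. maximal_ideal_of R M \<and> I \<subseteq> M"
proof -
  define \<A> where "\<A> = {J. ideal_of R J \<and> I \<subseteq> J \<and> 1 \<notin> J}"
  have "\<exists>M\<in>\<A>. \<forall>X\<in>\<A>. M \<subseteq> X \<longrightarrow> X = M"
  proof (rule subset_Zorn_nonempty)
    show "\<A> \<noteq> {}" using I one unfolding \<A>_def by blast
    fix \<C> assume "\<C> \<noteq> {}" "subset.chain \<A> \<C>"
    then show "\<Union>\<C> \<in> \<A>"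
      unfolding \<A>_def subset_chain_def by (auto intro!: ideal_of_Union_chain)
  qed
  then obtain M where M: "M \<in> \<A>" "\<And>X. X \<in> \<A> \<Longrightarrow> M \<subseteq> X \<Longrightarrow> X = M" by blast
  have "maximal_ideal_of R M"
    unfolding maximal_ideal_of_def
  proof (intro conjI allI impI)
    show "ideal_of R M" "M \<noteq> R" using M(1) subring_1[OF R] unfolding \<A>_def by auto
    fix J assume "ideal_of R J \<and> M \<subseteq> J"
    then show "J = M \<or> J = R"
      using M ideal_of_eq_if_one unfolding \<A>_def by blast
  qed
  then show ?thesis using M(1) unfolding \<A>_def by blast
qed

section \<open>Localization at a prime ideal\<close>

locale prime_localization =
  fixes R :: "'k::field set" and P :: "'k set"
  assumes subring: "subring_of R" and prime: "prime_ideal_of R P"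
begin

abbreviation "L \<equiv> localization R P"

lemma ideal_P: "ideal_of R P"
  using prime_ideal_of_ideal[OF prime] .

lemma P_subset: "P \<subseteq> R"
  using ideal_of_subset[OF ideal_P] .

lemma nonzero_if_notin: "b \<notin> P \<Longrightarrow> b \<noteq> 0"
  using ideal_of_0[OF ideal_P] by auto

lemma localizationI: "a \<in> R \<Longrightarrow> b \<in> R \<Longrightarrow> b \<notin> P \<Longrightarrow> a / b \<in> L"
  unfolding localization_def by blast

lemma localizationE:
  assumes "x \<in> L"
  obtains a b where "a \<in> R" "b \<in> R" "b \<notin> P" "x = a / b"
  using assms unfolding localization_def by blast

lemma localization_if_mult: "g * f \<in> R \<Longrightarrow> f \<in> R \<Longrightarrow> f \<notin> P \<Longrightarrow> g \<in> L"
  using localizationI[of "g * f" f] nonzero_if_notin[of f] by simp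

lemma inverse_in_localization: "f \<in> R \<Longrightarrow> f \<notin> P \<Longrightarrow> 1 / f \<in> L"
  using localization_if_mult[of "1 / f" f] nonzero_if_notin[of f] subring_1[OF subring] by simp

lemma subset_localization: "R \<subseteq> L"
  by (intro subsetI localization_if_mult[of _ 1])
    (simp_all add: subring_1[OF subring] prime_ideal_of_1[OF prime])

lemma localization_closed:
  assumes "x \<in> L" "y \<in> L"
  shows localization_add: "x + y \<in> L"
    and localization_diff: "x - y \<in> L"
    and localization_mult: "x * y \<in> L"
proof -
  obtain a b where ab: "a \<in> R" "b \<in> R" "b \<notin> P" "x = a / b" using assms(1) by (rule localizationE)
  obtain c d where cd: "c \<in> R" "d \<in> R" "d \<notin> P" "y = c / d" using assms(2) by (rule localizationE)
  have bd: "b * d \<in> R" "b * d \<notin> P"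
    using subring_mult[OF subring ab(2) cd(2)] prime_ideal_of_mult[OF prime ab(2) cd(2) ab(3) cd(3)] .
  have "a * d \<in> R" "c * b \<in> R" "a * c \<in> R"
    using ab cd subring_mult[OF subring] by blast+
  then have "(a * d + c * b) / (b * d) \<in> L" "(a * d - c * b) / (b * d) \<in> L"
    "(a * c) / (b * d) \<in> L"
    using localizationI[OF _ bd] subring_add[OF subring] subring_diff[OF subring] by blast+
  moreover have "x + y = (a * d + c * b) / (b * d)" "x - y = (a * d - c * b) / (b * d)"
    "x * y = (a * c) / (b * d)"
    using ab cd nonzero_if_notin by (simp_all add: field_simps)
  ultimately show "x + y \<in> L" "x - y \<in> L" "x * y \<in> L" by simp_all
qed

lemma subring_localization: "subring_of L"
proof -
  have "0 \<in> L" "1 \<in> L"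
    using subset_localization subring_0[OF subring] subring_1[OF subring] by blast+
  then show ?thesis
    unfolding subring_of_def by (auto intro: localization_add localization_diff localization_mult)
qed

lemma mem_prime_if_div_in_localization:
  assumes t: "t \<in> P" "t \<noteq> 0" and y: "y \<in> R" "y / t \<in> L"
  shows "y \<in> P"
proof -
  obtain c d where cd: "c \<in> R" "d \<in> R" "d \<notin> P" "y / t = c / d" using y(2) by (rule localizationE)
  have "y * d = c * t" using cd t nonzero_if_notin[of d] by (simp add: field_simps)
  moreover have "c * t \<in> P" using ideal_of_mult[OF ideal_P] cd t by blast
  ultimately show "y \<in> P" using prime_ideal_of_mult[OF prime y(1) cd(2)] cd(3) by metis
qed

lemma inverse_notin_localization: "t \<in> P \<Longrightarrow> t \<noteq> 0 \<Longrightarrow> 1 / t \<notin> L"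
  using mem_prime_if_div_in_localization[of t 1] prime_ideal_of_1[OF prime] subring_1[OF subring]
  by blast

definition PL :: "'k set" where
  "PL = {a / b | a b. a \<in> P \<and> b \<in> R \<and> b \<notin> P}"

lemma P_subset_PL: "P \<subseteq> PL"
proof
  fix p assume "p \<in> P"
  then have "p / 1 \<in> PL"
    unfolding PL_def using subring_1[OF subring] prime_ideal_of_1[OF prime] by blast
  then show "p \<in> PL" by simp
qed

lemma ideal_PL: "ideal_of L PL"
  unfolding ideal_of_def
proof (intro conjI ballI subsetI)
  show "x \<in> L" if "x \<in> PL" for x
    using that P_subset localizationI unfolding PL_def by blast
  show "0 \<in> PL" using P_subset_PL ideal_of_0[OF ideal_P] by blast
next
  fix x y assume "x \<in> PL" "y \<in> PL"
  then obtain a b c d where ab: "a \<in> P" "b \<in> R" "b \<notin> P" "x = a / b"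
    and cd: "c \<in> P" "d \<in> R" "d \<notin> P" "y = c / d" unfolding PL_def by blast
  have "x + y = (d * a + b * c) / (b * d)" using ab cd nonzero_if_notin by (simp add: field_simps)
  moreover have "d * a + b * c \<in> P"
    using ab cd ideal_of_add[OF ideal_P] ideal_of_mult[OF ideal_P] by blast
  moreover have "b * d \<in> R" "b * d \<notin> P"
    using subring_mult[OF subring ab(2) cd(2)] prime_ideal_of_mult[OF prime ab(2) cd(2) ab(3) cd(3)] .
  ultimately show "x + y \<in> PL" unfolding PL_def by blast
next
  fix y x assume "y \<in> L" "x \<in> PL"
  then obtain a b c d where ab: "a \<in> P" "b \<in> R" "b \<notin> P" "x = a / b"
    and cd: "c \<in> R" "d \<in> R" "d \<notin> P" "y = c / d" unfolding PL_def localization_def by blast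
  have "y * x = (c * a) / (d * b)" using ab cd by simp
  moreover have "c * a \<in> P"
    using ab cd ideal_of_mult[OF ideal_P] by blast
  moreover have "d * b \<in> R" "d * b \<notin> P"
    using subring_mult[OF subring cd(2) ab(2)] prime_ideal_of_mult[OF prime cd(2) ab(2) cd(3) ab(3)] .
  ultimately show "y * x \<in> PL" unfolding PL_def by blast
qed

lemma one_notin_PL: "1 \<notin> PL"
  unfolding PL_def using nonzero_if_notin by (force simp: field_simps)

lemma inverse_in_localization_if_notin_PL:
  assumes "x \<in> L" "x \<notin> PL"
  shows "1 / x \<in> L"
proof -
  obtain a b where ab: "a \<in> R" "b \<in> R" "b \<notin> P" "x = a / b" using assms(1) by (rule localizationE)
  then have "a \<notin> P" using assms(2) unfolding PL_def by blast
  then show ?thesis using localizationI[of b a] ab by simp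
qed

text \<open>If a generates the ideal and \<open>a = \<Sum> c\<^sub>h h\<close>, then \<open>\<Sum> c\<^sub>h (h / a) = 1\<close>, so in the
  local ring L one of the quotients \<open>h / a\<close> is a unit.\<close>
lemma DVR_generator_in_set:
  assumes DVR: "is_DVR L" and H: "finite H" "H \<subseteq> L" "h1 \<in> H" "h1 \<noteq> 0"
  shows "\<exists>h0\<in>H. h0 \<noteq> 0 \<and> (\<forall>h\<in>H. h / h0 \<in> L)"
proof -
  have "ideal_of L (gen_ideal L H)" by (rule gen_ideal_ideal[OF subring_localization H(2)])
  then obtain a where a: "gen_ideal L H = {a * x | x. x \<in> L}"
    using DVR unfolding is_DVR_def by blast
  have "H \<subseteq> {a * x | x. x \<in> L}"
    unfolding a[symmetric] by (rule gen_ideal_base[OF subring_localization])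
  then have "\<forall>h\<in>H. \<exists>s. s \<in> L \<and> h = a * s" by blast
  then obtain s where s: "\<And>h. h \<in> H \<Longrightarrow> s h \<in> L" "\<And>h. h \<in> H \<Longrightarrow> a * s h = h" by metis
  have "a * 1 \<in> gen_ideal L H" unfolding a using subring_1[OF subring_localization] by blast
  then have "a \<in> gen_ideal L H" by simp
  then obtain G c where G: "finite G" "G \<subseteq> H" "\<forall>g\<in>G. c g \<in> L" "a = (\<Sum>g\<in>G. c g * g)"
    unfolding gen_ideal_def by blast
  have a_nz: "a \<noteq> 0" using s(2)[OF H(3)] H(4) by auto
  have "a = (\<Sum>g\<in>G. c g * g)" by (rule G(4))
  also have "\<dots> = (\<Sum>g\<in>G. c g * (a * s g))"
    by (rule sum.cong[OF refl]) (use G(2) s(2) in \<open>metis subsetD\<close>)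
  also have "\<dots> = a * (\<Sum>g\<in>G. c g * s g)"
    by (simp add: sum_distrib_left mult.left_commute)
  finally have "a * (\<Sum>g\<in>G. c g * s g) = a * 1" by simp
  then have "(\<Sum>g\<in>G. c g * s g) = 1" using a_nz by simp
  then obtain h0 where h0: "h0 \<in> G" "c h0 * s h0 \<notin> PL"
    using ideal_of_sum[OF ideal_PL G(1), of "\<lambda>g. c g * s g"] one_notin_PL by force
  then have "s h0 \<notin> PL" "h0 \<in> H" using ideal_of_mult[OF ideal_PL] G(2,3) by blast+
  then have unit: "1 / s h0 \<in> L" "s h0 \<noteq> 0"
    using inverse_in_localization_if_notin_PL[OF s(1)] ideal_of_0[OF ideal_PL] by metis+
  have "h / h0 \<in> L" if "h \<in> H" for h
  proof -
    have "h / h0 = (a * s h) / (a * s h0)" using s(2) that \<open>h0 \<in> H\<close> by simp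
    also have "\<dots> = s h * (1 / s h0)" using a_nz by simp
    finally show ?thesis using localization_mult[OF s(1)[OF that] unit(1)] by simp
  qed
  moreover have "h0 \<noteq> 0" using s(2)[OF \<open>h0 \<in> H\<close>] a_nz unit(2) by (metis mult_eq_0_iff)
  ultimately show ?thesis using \<open>h0 \<in> H\<close> by blast
qed

lemma prod_in_ring_notin_prime:
  "finite G \<Longrightarrow> (\<And>g. g \<in> G \<Longrightarrow> f g \<in> R \<and> f g \<notin> P) \<Longrightarrow> prod f G \<in> R \<and> prod f G \<notin> P"
proof (induction G rule: finite_induct)
  case empty
  then show ?case using subring_1[OF subring] prime_ideal_of_1[OF prime] by simp
next
  case (insert x F)
  then show ?case using subring_mult[OF subring] prime_ideal_of_mult[OF prime] by simp
qed

lemma common_denominator: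
  assumes H: "finite H" "h0 \<in> H" "h0 \<noteq> 0" "\<And>h. h \<in> H \<Longrightarrow> h / h0 \<in> L"
  shows "\<exists>g. (\<forall>h\<in>H. g * h \<in> R) \<and> g * h0 \<in> R \<and> g * h0 \<notin> P"
proof -
  have "\<forall>h\<in>H. \<exists>a b. a \<in> R \<and> b \<in> R \<and> b \<notin> P \<and> h / h0 = a / b"
    using H(4) unfolding localization_def by blast
  then obtain \<alpha> \<beta> where ab: "\<And>h. h \<in> H \<Longrightarrow> \<alpha> h \<in> R \<and> \<beta> h \<in> R \<and> \<beta> h \<notin> P \<and> h / h0 = \<alpha> h / \<beta> h"
    by metis
  define S where "S = prod \<beta> H"
  have S: "S \<in> R" "S \<notin> P"
    unfolding S_def using prod_in_ring_notin_prime[OF H(1)] ab by blast+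
  have "S / h0 * h \<in> R" if h: "h \<in> H" for h
  proof -
    have "S = \<beta> h * prod \<beta> (H - {h})" unfolding S_def using h H(1) by (simp add: prod.remove)
    then have "S / h0 * h = prod \<beta> (H - {h}) * \<alpha> h"
      using ab[OF h] nonzero_if_notin[of "\<beta> h"] H(3) by (simp add: field_simps)
    moreover have "prod \<beta> (H - {h}) \<in> R"
      using H(1) ab by (intro subring_prod[OF subring]) auto
    ultimately show ?thesis using subring_mult[OF subring] ab[OF h] by simp
  qed
  then show ?thesis using S H(3) by (intro exI[of _ "S / h0"]) simp
qed

end

definition uniformizer :: "'k::field set \<Rightarrow> 'k set \<Rightarrow> 'k \<Rightarrow> bool" where
  "uniformizer R P t \<longleftrightarrow> t \<in> P \<and> t \<noteq> 0 \<and> (\<forall>p\<in>P. p / t \<in> localization R P)"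

lemma (in prime_localization) uniformizer_exists:
  assumes DVR: "is_DVR L"
  shows "\<exists>t. uniformizer R P t"
proof -
  obtain \<pi> where \<pi>: "PL = {\<pi> * x | x. x \<in> L}"
    using DVR ideal_PL unfolding is_DVR_def by blast
  have "\<pi> * 1 \<in> PL" using \<pi> subring_1[OF subring_localization] by blast
  then obtain a b where ab: "a \<in> P" "b \<in> R" "b \<notin> P" "\<pi> = a / b" unfolding PL_def by auto
  have "\<exists>p\<in>P. p \<noteq> 0"
  proof (rule ccontr)
    assume P0: "\<not> ?thesis"
    have "inverse x \<in> L" if x: "x \<in> L" "x \<noteq> 0" for x
    proof -
      obtain c d where cd: "c \<in> R" "d \<in> R" "d \<notin> P" "x = c / d" using x(1) by (rule localizationE)
      then have "c \<notin> P" using P0 x(2) by auto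
      then show ?thesis using localizationI[of d c] cd by simp
    qed
    then show False using DVR unfolding is_DVR_def by blast
  qed
  then obtain p0 x where "p0 \<noteq> 0" "p0 = \<pi> * x" using P_subset_PL \<pi> by blast
  then have a_nz: "a \<noteq> 0" using ab(4) by auto
  have "p / a \<in> L" if p: "p \<in> P" for p
  proof -
    obtain x where x: "x \<in> L" "p = \<pi> * x" using \<pi> P_subset_PL p by blast
    have "p / a = x * (1 / b)" using x(2) ab(4) a_nz nonzero_if_notin[OF ab(3)] by simp
    moreover have "x * (1 / b) \<in> L"
      using localization_mult[OF x(1)] inverse_in_localization ab(2,3) by blast
    ultimately show ?thesis by simp
  qed
  then show ?thesis using ab(1) a_nz unfolding uniformizer_def by blast
qed

section \<open>Invertibility of finitely generated ideals\<close>

locale almost_Dedekind_domain =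
  fixes R :: "'k::field set"
  assumes almost_Dedekind: "almost_Dedekind R"
begin

lemma subring: "subring_of R"
  using almost_Dedekind unfolding almost_Dedekind_def by blast

lemma is_DVR_localization: "M \<in> MaxSpec R \<Longrightarrow> is_DVR (localization R M)"
  using almost_Dedekind unfolding almost_Dedekind_def by blast

lemma prime_localization_MaxSpec: "M \<in> MaxSpec R \<Longrightarrow> prime_localization R M"
  using maximal_imp_prime[OF subring] subring unfolding prime_localization_def MaxSpec_def by blast

end

definition colon :: "'k::field set \<Rightarrow> 'k set \<Rightarrow> 'k set" where
  "colon R H = {g. \<forall>h\<in>H. g * h \<in> R}"

text \<open>Nonzero finitely generated ideals are invertible: \<open>H (R : H) = R\<close>. Locally at a
  maximal ideal M, H is generated by one of its elements h0, and a common denominator of the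
  quotients h / h0 gives an element of \<open>(R : H) h0\<close> outside M.\<close>
lemma (in almost_Dedekind_domain) one_in_ideal_times_colon:
  assumes H: "finite H" "H \<subseteq> R" "k \<in> H" "k \<noteq> 0"
  shows "1 \<in> gen_ideal R {g * h | g h. g \<in> colon R H \<and> h \<in> H}"
proof (rule ccontr)
  let ?I = "gen_ideal R {g * h | g h. g \<in> colon R H \<and> h \<in> H}"
  assume "1 \<notin> ?I"
  moreover have "{g * h | g h. g \<in> colon R H \<and> h \<in> H} \<subseteq> R"
    unfolding colon_def by auto
  then have "ideal_of R ?I" by (rule gen_ideal_ideal[OF subring])
  ultimately obtain M where M: "maximal_ideal_of R M" "?I \<subseteq> M"
    using exists_maximal_ideal[OF subring] by blast
  then have MM: "M \<in> MaxSpec R" unfolding MaxSpec_def by blast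
  interpret prime_localization R M using prime_localization_MaxSpec[OF MM] .
  have "H \<subseteq> L" using H(2) subset_localization by blast
  then obtain h0 where h0: "h0 \<in> H" "h0 \<noteq> 0" "\<forall>h\<in>H. h / h0 \<in> L"
    using DVR_generator_in_set[OF is_DVR_localization[OF MM] H(1) _ H(3,4)] by blast
  then obtain g where g: "\<forall>h\<in>H. g * h \<in> R" "g * h0 \<notin> M"
    using common_denominator[OF H(1)] by blast
  then have "g * h0 \<in> {g * h | g h. g \<in> colon R H \<and> h \<in> H}"
    using h0(1) unfolding colon_def by (intro CollectI exI conjI refl) auto
  then have "g * h0 \<in> ?I" by (rule subsetD[OF gen_ideal_base[OF subring]])
  then have "g * h0 \<in> M" using M(2) by (rule subsetD[rotated])
  then show False using g(2) by blast
qed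

lemma (in almost_Dedekind_domain) mem_ideal_by_colon:
  assumes I: "ideal_of S I" "R \<subseteq> S" and H: "finite H" "H \<subseteq> R" "k \<in> H" "k \<noteq> 0"
    and x: "\<And>g h. g \<in> colon R H \<Longrightarrow> h \<in> H \<Longrightarrow> x * (g * h) \<in> I"
  shows "x \<in> I"
proof -
  have "gen_ideal R {g * h | g h. g \<in> colon R H \<and> h \<in> H} \<subseteq> {y. x * y \<in> I}"
  proof (rule gen_ideal_least)
    show "0 \<in> {y. x * y \<in> I}" using ideal_of_0[OF I(1)] by simp
    show "y + z \<in> {y. x * y \<in> I}" if "y \<in> {y. x * y \<in> I}" "z \<in> {y. x * y \<in> I}" for y z
      using that ideal_of_add[OF I(1)] by (simp add: distrib_left)
    show "r * y \<in> {y. x * y \<in> I}" if "r \<in> R" "y \<in> {y. x * y \<in> I}" for r y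
      using that ideal_of_mult[OF I(1), of r "x * y"] I(2) by (auto simp: mult.left_commute)
    show "{g * h | g h. g \<in> colon R H \<and> h \<in> H} \<subseteq> {y. x * y \<in> I}" using x by auto
  qed
  then have "x * 1 \<in> I" using one_in_ideal_times_colon[OF H] by blast
  then show ?thesis by simp
qed

section \<open>The overring T of a set of maximal ideals\<close>

locale localization_intersection = almost_Dedekind_domain +
  fixes C
  assumes C_subset: "C \<subseteq> MaxSpec R"
begin

abbreviation "T \<equiv> T_of R C"

lemma T_subset_localization: "Q \<in> C \<Longrightarrow> T \<subseteq> localization R Q"
  unfolding T_of_def by blast

lemma subring_T: "subring_of T"
proof -
  have "\<forall>Q\<in>C. subring_of (localization R Q)"
    using prime_localization.subring_localization prime_localization_MaxSpec C_subset by blast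
  then show ?thesis unfolding subring_of_def T_of_def by blast
qed

lemma subset_T: "R \<subseteq> T"
  using prime_localization.subset_localization prime_localization_MaxSpec C_subset
  unfolding T_of_def by blast

lemma ideal_PT: "P \<subseteq> R \<Longrightarrow> ideal_of T (gen_ideal T P)"
  using gen_ideal_ideal[OF subring_T] subset_T by blast

lemma div_uniformizer_if_mem_PT:
  assumes P: "P \<in> C" and t: "uniformizer R P t" and x: "x \<in> gen_ideal T P"
  shows "x / t \<in> localization R P"
proof -
  interpret prime_localization R P using prime_localization_MaxSpec C_subset P by blast
  have "gen_ideal T P \<subseteq> {x. x / t \<in> L}"
  proof (rule gen_ideal_least)
    show "0 \<in> {x. x / t \<in> L}" using subring_0[OF subring_localization] by simp
    show "x + y \<in> {x. x / t \<in> L}" if "x \<in> {x. x / t \<in> L}" "y \<in> {x. x / t \<in> L}" for x y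
      using that localization_add by (simp add: add_divide_distrib)
    show "a * x \<in> {x. x / t \<in> L}" if "a \<in> T" "x \<in> {x. x / t \<in> L}" for a x
      using that localization_mult[of a "x / t"] T_subset_localization[OF P] by auto
    show "P \<subseteq> {x. x / t \<in> L}" using t unfolding uniformizer_def by blast
  qed
  then show ?thesis using x by blast
qed

lemma mem_PT_if_div_uniformizer:
  assumes P: "P \<in> C" and t: "uniformizer R P t" and x: "x \<in> T" "x / t \<in> localization R P"
  shows "x \<in> gen_ideal T P"
proof -
  interpret prime_localization R P using prime_localization_MaxSpec C_subset P by blast
  have t: "t \<in> P" "t \<noteq> 0" using t unfolding uniformizer_def by auto
  have "x \<in> L" using T_subset_localization[OF P] x(1) by blast
  then obtain a b where ab: "a \<in> R" "b \<in> R" "b \<notin> P" "x = a / b" by (rule localizationE)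
  have b: "b \<noteq> 0" using nonzero_if_notin ab(3) .
  show "x \<in> gen_ideal T P"
  proof (rule mem_ideal_by_colon[OF ideal_PT[OF P_subset] subset_T, of "{a, b}" b])
    fix g h assume g: "g \<in> colon R {a, b}" and h: "h \<in> {a, b}"
    then have ga: "g * a \<in> R" and gb: "g * b \<in> R" unfolding colon_def by auto
    have "(g * a) / t = x / t * (g * b)" using ab(4) b by simp
    moreover have "x / t * (g * b) \<in> L"
      using localization_mult[OF x(2)] subset_localization gb by blast
    ultimately have "(g * a) / t \<in> L" by (simp only:)
    then have "g * a \<in> P" by (rule mem_prime_if_div_in_localization[OF t ga])
    then have ga_PT: "g * a \<in> gen_ideal T P" using gen_ideal_base[OF subring_T] by blast
    from h consider "h = a" | "h = b" by blast
    then show "x * (g * h) \<in> gen_ideal T P"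
    proof cases
      case 1
      then show ?thesis using ideal_of_mult[OF ideal_PT[OF P_subset] x(1) ga_PT] by simp
    next
      case 2
      have "x * (g * b) = g * a" using ab(4) b by simp
      then show ?thesis unfolding 2 using ga_PT by (simp only:)
    qed
  qed (use ab b in auto)
qed

lemma one_notin_PT:
  assumes P: "P \<in> C" and t: "uniformizer R P t"
  shows "1 \<notin> gen_ideal T P"
proof
  interpret prime_localization R P using prime_localization_MaxSpec C_subset P by blast
  assume "1 \<in> gen_ideal T P"
  then have "1 / t \<in> L" by (rule div_uniformizer_if_mem_PT[OF P t])
  then show False using inverse_notin_localization t unfolding uniformizer_def by blast
qed

text \<open>In \<open>R\<^sub>P\<close> the uniformizer t is not divisible by \<open>t\<^sup>2\<close>, while every element of
  \<open>(PT)\<^sup>2\<close> is.\<close>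
lemma uniformizer_notin_PT_square:
  assumes P: "P \<in> C" and t: "uniformizer R P t"
  shows "t \<notin> ideal_square T (gen_ideal T P)"
proof
  interpret prime_localization R P using prime_localization_MaxSpec C_subset P by blast
  have t_nz: "t \<noteq> 0" and tP: "t \<in> P" using t unfolding uniformizer_def by auto
  have "ideal_square T (gen_ideal T P) \<subseteq> {x. x / (t * t) \<in> L}"
    unfolding ideal_square_def
  proof (rule gen_ideal_least)
    show "0 \<in> {x. x / (t * t) \<in> L}" using subring_0[OF subring_localization] by simp
    show "x + y \<in> {x. x / (t * t) \<in> L}" if "x \<in> {x. x / (t * t) \<in> L}" "y \<in> {x. x / (t * t) \<in> L}" for x y
      using that localization_add by (simp add: add_divide_distrib)
    show "a * x \<in> {x. x / (t * t) \<in> L}" if "a \<in> T" "x \<in> {x. x / (t * t) \<in> L}" for a x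
      using that localization_mult[of a "x / (t * t)"] T_subset_localization[OF P] by auto
    show "{x * y |x y. x \<in> gen_ideal T P \<and> y \<in> gen_ideal T P} \<subseteq> {x. x / (t * t) \<in> L}"
    proof
      fix z assume "z \<in> {x * y |x y. x \<in> gen_ideal T P \<and> y \<in> gen_ideal T P}"
      then obtain x y where "z = x * y" "x \<in> gen_ideal T P" "y \<in> gen_ideal T P" by blast
      moreover have "x / t * (y / t) \<in> L"
        using calculation(2,3) div_uniformizer_if_mem_PT[OF P t] localization_mult by blast
      ultimately show "z \<in> {x. x / (t * t) \<in> L}" by simp
    qed
  qed
  moreover assume "t \<in> ideal_square T (gen_ideal T P)"
  ultimately have "t / (t * t) \<in> L" by blast
  moreover have "t / (t * t) = 1 / t" using t_nz by simp
  ultimately have "1 / t \<in> L" by simp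
  then show False using inverse_notin_localization[OF tP t_nz] by blast
qed

lemma maximal_PT:
  assumes P: "P \<in> C"
  shows "maximal_ideal_of T (gen_ideal T P)"
proof -
  have PM: "P \<in> MaxSpec R" using P C_subset by blast
  interpret prime_localization R P using prime_localization_MaxSpec[OF PM] .
  obtain t where t: "uniformizer R P t" using uniformizer_exists[OF is_DVR_localization[OF PM]] ..
  have PT: "ideal_of T (gen_ideal T P)" using ideal_PT[OF P_subset] .
  have "J = T" if J: "ideal_of T J" "gen_ideal T P \<subseteq> J" and x: "x \<in> J" "x \<notin> gen_ideal T P" for J x
  proof -
    have xT: "x \<in> T" using ideal_of_subset[OF J(1)] x(1) by blast
    obtain a b where ab: "a \<in> R" "b \<in> R" "b \<notin> P" "x = a / b"
      using T_subset_localization[OF P] xT by (blast elim: localizationE)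
    have "a \<notin> P"
    proof
      assume "a \<in> P"
      then have "a / t * (1 / b) \<in> L"
        using t localization_mult inverse_in_localization ab(2,3) unfolding uniformizer_def by blast
      moreover have "x / t = a / t * (1 / b)" using ab(4) by simp
      ultimately have "x \<in> gen_ideal T P" using mem_PT_if_div_uniformizer[OF P t xT] by simp
      then show False using x(2) by blast
    qed
    then obtain m r where mr: "m \<in> P" "r \<in> R" "1 = m + r * a"
      using maximal_ideal_comax[OF subring] PM ab(1) unfolding MaxSpec_def by blast
    have "1 = m + (r * b) * x" using mr(3) ab(4) nonzero_if_notin[OF ab(3)] by simp
    moreover have "m \<in> J" using mr(1) J(2) gen_ideal_base[OF subring_T] by blast
    moreover have "(r * b) * x \<in> J"
      using ideal_of_mult[OF J(1) _ x(1)] subset_T subring_mult[OF subring mr(2) ab(2)] by blast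
    ultimately have "1 \<in> J" using ideal_of_add[OF J(1)] by metis
    then show "J = T" using ideal_of_eq_if_one[OF J(1)] by blast
  qed
  then show ?thesis
    unfolding maximal_ideal_of_def using PT one_notin_PT[OF P t] subring_1[OF subring_T] by blast
qed

end

section \<open>One step of the critical sequence\<close>

definition Crit_step :: "'k::field set \<Rightarrow> 'k set set \<Rightarrow> 'k set set" where
  "Crit_step R C = {P \<in> MaxSpec R. gen_ideal (T_of R C) P \<in> Crit (T_of R C)}"

text \<open>D is closed in \<open>max_inv R\<close>, stated through the basic open sets
  \<open>{Q. F \<subseteq> Q}\<close>, F finite, of the inverse topology.\<close>
definition inv_closed :: "'k::field set \<Rightarrow> 'k set set \<Rightarrow> bool" where
  "inv_closed R D \<longleftrightarrow> (\<forall>P\<in>MaxSpec R - D. \<exists>F. finite F \<and> F \<subseteq> P \<and> (\<forall>Q\<in>D. \<not> F \<subseteq> Q))"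

lemma inv_closedE:
  assumes "inv_closed R D" "P \<in> MaxSpec R" "P \<notin> D"
  obtains F where "finite F" "F \<subseteq> P" "\<forall>Q\<in>D. \<not> F \<subseteq> Q"
proof -
  have "\<exists>F. finite F \<and> F \<subseteq> P \<and> (\<forall>Q\<in>D. \<not> F \<subseteq> Q)"
    using assms unfolding inv_closed_def by simp
  then show ?thesis by (elim exE conjE) (rule that)
qed

lemma inv_closed_INT:
  assumes "\<And>b. b \<in> B \<Longrightarrow> inv_closed R (D b)"
  shows "inv_closed R (\<Inter>b\<in>B. D b)"
  unfolding inv_closed_def
proof
  fix P assume "P \<in> MaxSpec R - (\<Inter>b\<in>B. D b)"
  then obtain b where b: "b \<in> B" "P \<in> MaxSpec R" "P \<notin> D b" by blast
  obtain F where "finite F" "F \<subseteq> P" "\<forall>Q\<in>D b. \<not> F \<subseteq> Q"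
    by (rule inv_closedE[OF assms b(2,3)]) (rule b(1))
  then show "\<exists>F. finite F \<and> F \<subseteq> P \<and> (\<forall>Q\<in>\<Inter>b\<in>B. D b. \<not> F \<subseteq> Q)"
    using b(1) by blast
qed

context localization_intersection
begin

lemma colon_subset_T:
  assumes "H \<subseteq> R" "\<And>Q. Q \<in> C \<Longrightarrow> \<not> H \<subseteq> Q"
  shows "colon R H \<subseteq> T"
proof
  fix g assume g: "g \<in> colon R H"
  have "g \<in> localization R Q" if Q: "Q \<in> C" for Q
  proof -
    obtain f where "f \<in> H" "f \<notin> Q" using assms(2)[OF Q] by blast
    then show ?thesis
      using prime_localization.localization_if_mult[OF prime_localization_MaxSpec] C_subset Q g assms(1)
      unfolding colon_def by blast
  qed
  then show "g \<in> T" unfolding T_of_def by blast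
qed

lemma Crit_step_subset:
  assumes closed: "inv_closed R C"
  shows "Crit_step R C \<subseteq> C"
proof
  fix P assume P: "P \<in> Crit_step R C"
  then have PM: "P \<in> MaxSpec R" and PT_max: "maximal_ideal_of T (gen_ideal T P)"
    unfolding Crit_step_def Crit_def MaxSpec_def by auto
  interpret prime_localization R P using prime_localization_MaxSpec[OF PM] .
  show "P \<in> C"
  proof (rule ccontr)
    assume "P \<notin> C"
    then obtain F where F: "finite F" "F \<subseteq> P" "\<forall>Q\<in>C. \<not> F \<subseteq> Q"
      by (rule inv_closedE[OF closed PM])
    obtain t where t: "t \<in> P" "t \<noteq> 0"
      using uniformizer_exists[OF is_DVR_localization[OF PM]] unfolding uniformizer_def by blast
    have colon_T: "colon R (insert t F) \<subseteq> T"
      using colon_subset_T[of "insert t F"] F t P_subset by blast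
    have "1 \<in> gen_ideal T P"
    proof (rule mem_ideal_by_colon[OF ideal_PT[OF P_subset] subset_T, where H = "insert t F" and k = t])
      fix g h assume g: "g \<in> colon R (insert t F)" and h: "h \<in> insert t F"
      have "h \<in> gen_ideal T P" using h F(2) t(1) gen_ideal_base[OF subring_T] by blast
      then show "1 * (g * h) \<in> gen_ideal T P"
        using ideal_of_mult[OF ideal_PT[OF P_subset]] g colon_T by auto
    qed (use F t P_subset in auto)
    then show False
      using PT_max ideal_of_eq_if_one subring_1[OF subring_T] unfolding maximal_ideal_of_def by blast
  qed
qed

lemma P_subset_gen_ideal_T:
  assumes P: "P \<in> C" and t: "uniformizer R P t" and F: "finite F" "F \<subseteq> R"
    and sep: "\<And>Q. Q \<in> C \<Longrightarrow> Q \<noteq> P \<Longrightarrow> \<not> F \<subseteq> Q"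
  shows "P \<subseteq> gen_ideal T (insert t F)"
proof
  interpret prime_localization R P using prime_localization_MaxSpec C_subset P by blast
  have t: "t \<in> P" "t \<noteq> 0" "\<And>p. p \<in> P \<Longrightarrow> p / t \<in> L" using t unfolding uniformizer_def by auto
  have H: "insert t F \<subseteq> R" using F(2) t(1) P_subset by blast
  let ?J = "gen_ideal T (insert t F)"
  have J: "ideal_of T ?J" using gen_ideal_ideal[OF subring_T] H subset_T by blast
  fix p assume p: "p \<in> P"
  show "p \<in> ?J"
  proof (rule mem_ideal_by_colon[OF J subset_T, where H = "insert t F" and k = t])
    fix g h assume g: "g \<in> colon R (insert t F)" and h: "h \<in> insert t F"
    have "p * g \<in> localization R Q" if Q: "Q \<in> C" for Q
    proof (cases "Q = P")
      case True
      have "p / t * (g * t) \<in> L"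
        using localization_mult t(3)[OF p] g subset_localization unfolding colon_def by blast
      then show ?thesis using True t(2) by simp
    next
      case False
      interpret Q: prime_localization R Q using prime_localization_MaxSpec C_subset Q by blast
      obtain f where "f \<in> F" "f \<notin> Q" using sep[OF Q False] by blast
      then have "g \<in> localization R Q"
        using Q.localization_if_mult g F(2) unfolding colon_def by blast
      then show ?thesis
        using Q.localization_mult Q.subset_localization p P_subset by blast
    qed
    then have "p * g \<in> T" unfolding T_of_def by blast
    moreover have "h \<in> ?J" using h gen_ideal_base[OF subring_T] by blast
    ultimately have "(p * g) * h \<in> ?J" by (rule ideal_of_mult[OF J])
    then show "p * (g * h) \<in> ?J" by (simp add: mult.assoc)
  qed (use F H t in auto)
qed

lemma Crit_step_not_isolated:
  assumes closed: "inv_closed R C" and P: "P \<in> Crit_step R C" and F: "finite F" "F \<subseteq> P"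
  shows "\<exists>Q\<in>C. Q \<noteq> P \<and> F \<subseteq> Q"
proof (rule ccontr)
  assume "\<not> ?thesis"
  then have sep: "\<And>Q. Q \<in> C \<Longrightarrow> Q \<noteq> P \<Longrightarrow> \<not> F \<subseteq> Q" by blast
  have PC: "P \<in> C" using Crit_step_subset[OF closed] P by blast
  then have PM: "P \<in> MaxSpec R" using C_subset by blast
  interpret prime_localization R P using prime_localization_MaxSpec[OF PM] .
  obtain t where t: "uniformizer R P t" using uniformizer_exists[OF is_DVR_localization[OF PM]] ..
  let ?J = "gen_ideal T (insert t F)"
  have H: "finite (insert t F)" "insert t F \<subseteq> T"
    using F t P_subset subset_T unfolding uniformizer_def by auto
  have P_J: "P \<subseteq> ?J"
    using P_subset_gen_ideal_T[OF PC t F(1) _ sep] F(2) P_subset by blast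
  have "insert t F \<subseteq> gen_ideal T P"
    using gen_ideal_base[OF subring_T, of P] F(2) t unfolding uniformizer_def by blast
  then have J_PT: "?J \<subseteq> gen_ideal T P" by (rule gen_ideal_minimal[OF ideal_PT[OF P_subset]])
  moreover have "fin_gen_ideal_of T ?J" unfolding fin_gen_ideal_of_def using H by blast
  moreover have "gen_ideal T P \<in> Crit T" using P unfolding Crit_step_def by blast
  ultimately obtain N where N: "maximal_ideal_of T N" "?J \<subseteq> ideal_square T N"
    unfolding Crit_def MaxSpec_def by blast
  have N_ideal: "ideal_of T N" and "N \<noteq> T" using N(1) unfolding maximal_ideal_of_def by blast+
  have "?J \<subseteq> N" using N(2) ideal_square_subset[OF N_ideal] by (rule subset_trans)
  then have "gen_ideal T P \<subseteq> N" using P_J by (intro gen_ideal_minimal[OF N_ideal]) blast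
  then have "N = gen_ideal T P"
    using maximal_PT[OF PC] N_ideal \<open>N \<noteq> T\<close> unfolding maximal_ideal_of_def by blast
  moreover have "t \<in> ideal_square T N"
    using N(2) gen_ideal_base[OF subring_T, of "insert t F"] by blast
  ultimately show False using uniformizer_notin_PT_square[OF PC t] by simp
qed

lemma inv_closed_Crit_step:
  assumes closed: "inv_closed R C"
  shows "inv_closed R (Crit_step R C)"
  unfolding inv_closed_def
proof
  fix P assume P: "P \<in> MaxSpec R - Crit_step R C"
  show "\<exists>F. finite F \<and> F \<subseteq> P \<and> (\<forall>Q\<in>Crit_step R C. \<not> F \<subseteq> Q)"
  proof (cases "P \<in> C")
    case False
    have "P \<in> MaxSpec R" using P by blast
    then obtain F where "finite F" "F \<subseteq> P" "\<forall>Q\<in>C. \<not> F \<subseteq> Q"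
      using inv_closedE[OF closed _ False] by blast
    then show ?thesis using Crit_step_subset[OF closed] by blast
  next
    case True
    interpret prime_localization R P using prime_localization_MaxSpec P by blast
    have "gen_ideal T P \<in> MaxSpec T" using maximal_PT[OF True] unfolding MaxSpec_def by blast
    moreover have "gen_ideal T P \<notin> Crit T" using P unfolding Crit_step_def by blast
    ultimately obtain J where J: "fin_gen_ideal_of T J" "J \<subseteq> gen_ideal T P"
      and not_sq: "\<forall>N\<in>MaxSpec T. \<not> J \<subseteq> ideal_square T N"
      unfolding Crit_def by blast
    obtain F where F: "finite F" "F \<subseteq> P" "J \<subseteq> gen_ideal T F"
      using fin_gen_subset_gen_ideal[OF subring_T J] by blast
    have "\<not> F \<subseteq> Q" if Q: "Q \<in> Crit_step R C" for Q
    proof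
      assume "F \<subseteq> Q"
      then have "gen_ideal T F \<subseteq> gen_ideal T Q" by (rule gen_ideal_mono)
      moreover have "fin_gen_ideal_of T (gen_ideal T F)"
        unfolding fin_gen_ideal_of_def using F P_subset subset_T by blast
      moreover have "gen_ideal T Q \<in> Crit T" using Q unfolding Crit_step_def by blast
      ultimately obtain N where "N \<in> MaxSpec T" "gen_ideal T F \<subseteq> ideal_square T N"
        unfolding Crit_def by blast
      then show False using not_sq F(3) by blast
    qed
    then show ?thesis using F by blast
  qed
qed

end

section \<open>The inverse topology on maximal ideals\<close>

definition basic_open :: "'k::field set \<Rightarrow> 'k \<Rightarrow> 'k set set" where
  "basic_open R f = {P \<in> Spec R. f \<notin> P}"

lemma basic_open_mult:
  assumes "f \<in> R" "g \<in> R"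
  shows "basic_open R (f * g) \<subseteq> basic_open R f \<inter> basic_open R g"
proof
  fix P assume "P \<in> basic_open R (f * g)"
  then have P: "prime_ideal_of R P" "f * g \<notin> P" unfolding basic_open_def Spec_def by auto
  have Pi: "ideal_of R P" using prime_ideal_of_ideal[OF P(1)] .
  have "g * f \<notin> P" using P(2) by (simp add: mult.commute)
  then have "f \<notin> P" using ideal_of_mult[OF Pi assms(2)] by blast
  moreover have "g \<notin> P" using ideal_of_mult[OF Pi assms(1)] P(2) by blast
  ultimately show "P \<in> basic_open R f \<inter> basic_open R g"
    using P(1) unfolding basic_open_def Spec_def by auto
qed

lemma zariski_open_basic:
  assumes R: "subring_of R" and U: "openin (zariski R) U" "Q \<in> U"
  shows "\<exists>f\<in>R. Q \<in> basic_open R f \<and> basic_open R f \<subseteq> U"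
proof -
  have "generate_topology_on (insert (Spec R) {basic_open R f | f. f \<in> R}) U"
    using U(1) unfolding zariski_def basic_open_def by (simp add: openin_topology_generated_by_iff)
  then show ?thesis using U(2)
  proof (induction arbitrary: Q rule: generate_topology_on.induct)
    case Empty
    then show ?case by simp
  next
    case (Int a b)
    obtain f where f: "f \<in> R" "Q \<in> basic_open R f" "basic_open R f \<subseteq> a" using Int by blast
    obtain g where g: "g \<in> R" "Q \<in> basic_open R g" "basic_open R g \<subseteq> b" using Int by blast
    have "Q \<in> basic_open R (f * g)"
      using f(1,2) g(1,2) prime_ideal_of_mult unfolding basic_open_def Spec_def by blast
    then show ?case
      using basic_open_mult[OF f(1) g(1)] subring_mult[OF R f(1) g(1)] f(3) g(3) by blast
  next
    case (UN K)
    then show ?case by blast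
  next
    case (Basis s)
    then consider "s = Spec R" | f where "f \<in> R" "s = basic_open R f" by blast
    then show ?case
    proof cases
      case 1
      then have "Q \<in> basic_open R 1" "basic_open R 1 \<subseteq> s"
        using Basis.prems prime_ideal_of_1 unfolding basic_open_def Spec_def by auto
      then show ?thesis using subring_1[OF R] by blast
    next
      case 2
      then show ?thesis using Basis.prems by blast
    qed
  qed
qed

lemma openin_basic_open: "f \<in> R \<Longrightarrow> openin (zariski R) (basic_open R f)"
  unfolding zariski_def basic_open_def by (rule topology_generated_by_Basis) blast

lemma compact_open_complement:
  assumes R: "subring_of R" and U: "openin (zariski R) U" "compactin (zariski R) U"
    and P: "P \<in> Spec R" "P \<notin> U"
  shows "\<exists>F. finite F \<and> F \<subseteq> P \<and> (\<forall>Q\<in>Spec R. F \<subseteq> Q \<longrightarrow> Q \<notin> U)"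
proof -
  define \<U> where "\<U> = {basic_open R f | f. f \<in> R \<and> basic_open R f \<subseteq> U}"
  have "\<forall>B\<in>\<U>. openin (zariski R) B" unfolding \<U>_def using openin_basic_open by blast
  moreover have "U \<subseteq> \<Union>\<U>"
  proof
    fix Q assume "Q \<in> U"
    then obtain f where "f \<in> R" "Q \<in> basic_open R f" "basic_open R f \<subseteq> U"
      using zariski_open_basic[OF R U(1)] by blast
    then show "Q \<in> \<Union>\<U>" unfolding \<U>_def by blast
  qed
  ultimately obtain \<F> where \<F>: "finite \<F>" "\<F> \<subseteq> \<U>" "U \<subseteq> \<Union>\<F>"
    using U(2) unfolding compactin_def by meson
  have "\<forall>S\<in>\<F>. \<exists>f. f \<in> R \<and> S = basic_open R f \<and> S \<subseteq> U" using \<F>(2) unfolding \<U>_def by blast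
  then obtain f where f: "\<And>S. S \<in> \<F> \<Longrightarrow> f S \<in> R \<and> S = basic_open R (f S) \<and> S \<subseteq> U"
    by metis
  have "f S \<in> P" if S: "S \<in> \<F>" for S
  proof (rule ccontr)
    assume "f S \<notin> P"
    then have "P \<in> basic_open R (f S)" using P(1) unfolding basic_open_def by blast
    then show False using f[OF S] P(2) by blast
  qed
  moreover have "Q \<notin> U" if Q: "Q \<in> Spec R" "f ` \<F> \<subseteq> Q" for Q
  proof
    assume "Q \<in> U"
    then obtain S where S: "S \<in> \<F>" "Q \<in> S" using \<F>(3) by blast
    then have "f S \<notin> Q" using f[OF S(1)] unfolding basic_open_def by blast
    then show False using Q(2) S(1) by blast
  qed
  ultimately show ?thesis using \<F>(1) by (intro exI[of _ "f ` \<F>"]) blast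
qed

lemma inverse_basic_nbhd:
  assumes R: "subring_of R"
    and s: "s \<in> insert (Spec R) {Spec R - U | U. openin (zariski R) U \<and> compactin (zariski R) U}"
    and P: "P \<in> s"
  shows "\<exists>F. finite F \<and> F \<subseteq> P \<and> (\<forall>Q\<in>Spec R. F \<subseteq> Q \<longrightarrow> Q \<in> s)"
proof (cases "s = Spec R")
  case True
  then show ?thesis by (intro exI[of _ "{}"]) simp
next
  case False
  then obtain U where U: "openin (zariski R) U" "compactin (zariski R) U" "s = Spec R - U"
    using s by auto
  then have "P \<in> Spec R" "P \<notin> U" using P by simp_all
  then obtain F where F: "finite F" "F \<subseteq> P" "\<forall>Q\<in>Spec R. F \<subseteq> Q \<longrightarrow> Q \<notin> U"
    using compact_open_complement[OF R U(1,2)] by meson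
  then show ?thesis unfolding U(3) by (intro exI[of _ F]) simp
qed

lemma inverse_open_nbhd:
  assumes R: "subring_of R" and V: "openin (inverse_topology R) V" "P \<in> V"
  shows "\<exists>F. finite F \<and> F \<subseteq> P \<and> (\<forall>Q\<in>Spec R. F \<subseteq> Q \<longrightarrow> Q \<in> V)"
proof -
  have "generate_topology_on
      (insert (Spec R) {Spec R - U | U. openin (zariski R) U \<and> compactin (zariski R) U}) V"
    using V(1) unfolding inverse_topology_def by (simp add: openin_topology_generated_by_iff)
  then show ?thesis using V(2)
  proof (induction arbitrary: P rule: generate_topology_on.induct)
    case Empty
    then show ?case by simp
  next
    case (Int a b)
    have "P \<in> a" "P \<in> b" using Int.prems by simp_all
    obtain F1 where F1: "finite F1" "F1 \<subseteq> P" "\<forall>Q\<in>Spec R. F1 \<subseteq> Q \<longrightarrow> Q \<in> a"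
      using Int.IH(1)[OF \<open>P \<in> a\<close>] by blast
    obtain F2 where F2: "finite F2" "F2 \<subseteq> P" "\<forall>Q\<in>Spec R. F2 \<subseteq> Q \<longrightarrow> Q \<in> b"
      using Int.IH(2)[OF \<open>P \<in> b\<close>] by blast
    from F1 F2 show ?case by (intro exI[of _ "F1 \<union> F2"]) simp
  next
    case (UN K)
    then obtain k where k: "k \<in> K" "P \<in> k" by blast
    then obtain F where "finite F" "F \<subseteq> P" "\<forall>Q\<in>Spec R. F \<subseteq> Q \<longrightarrow> Q \<in> k"
      using UN.IH[OF k] by blast
    with k(1) show ?case by (intro exI[of _ F]) blast
  next
    case (Basis s)
    then show ?case by (rule inverse_basic_nbhd[OF R])
  qed
qed

lemma topspace_max_inv: "subring_of R \<Longrightarrow> topspace (max_inv R) = MaxSpec R"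
  unfolding max_inv_def inverse_topology_def using MaxSpec_subset_Spec[of R] by auto

lemma in_derived_set_max_inv:
  assumes R: "subring_of R" and P: "P \<in> S" "P \<in> MaxSpec R"
    and acc: "\<And>F. finite F \<Longrightarrow> F \<subseteq> P \<Longrightarrow> \<exists>Q\<in>S \<inter> MaxSpec R. Q \<noteq> P \<and> F \<subseteq> Q"
  shows "P \<in> subtopology (max_inv R) S derived_set_of topspace (subtopology (max_inv R) S)"
  unfolding in_derived_set_of
proof (intro conjI allI impI)
  have top: "topspace (subtopology (max_inv R) S) = MaxSpec R \<inter> S"
    using topspace_max_inv[OF R] by simp
  show "P \<in> topspace (subtopology (max_inv R) S)" using top P by blast
  fix V assume V: "P \<in> V \<and> openin (subtopology (max_inv R) S) V"
  then obtain W where W: "openin (inverse_topology R) W" "V = W \<inter> (MaxSpec R \<inter> S)"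
    unfolding max_inv_def subtopology_subtopology openin_subtopology by blast
  obtain F where F: "finite F" "F \<subseteq> P" "\<forall>Q\<in>Spec R. F \<subseteq> Q \<longrightarrow> Q \<in> W"
    using inverse_open_nbhd[OF R W(1)] V W(2) by blast
  obtain Q where "Q \<in> S \<inter> MaxSpec R" "Q \<noteq> P" "F \<subseteq> Q" using acc[OF F(1,2)] by blast
  then show "\<exists>y. y \<noteq> P \<and> y \<in> topspace (subtopology (max_inv R) S) \<and> y \<in> V"
    using F(3) W(2) top MaxSpec_subset_Spec[OF R] by blast
qed

lemma (in localization_intersection) Crit_step_subset_derived:
  assumes closed: "inv_closed R C" and C_S: "C \<subseteq> S"
  shows "Crit_step R C \<subseteq> subtopology (max_inv R) S derived_set_of topspace (subtopology (max_inv R) S)"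
proof
  fix P assume P: "P \<in> Crit_step R C"
  then have "P \<in> C" using Crit_step_subset[OF closed] by blast
  show "P \<in> subtopology (max_inv R) S derived_set_of topspace (subtopology (max_inv R) S)"
  proof (rule in_derived_set_max_inv[OF subring])
    show "P \<in> S" "P \<in> MaxSpec R" using \<open>P \<in> C\<close> C_S C_subset by blast+
    show "\<exists>Q\<in>S \<inter> MaxSpec R. Q \<noteq> P \<and> F \<subseteq> Q" if "finite F" "F \<subseteq> P" for F
      using Crit_step_not_isolated[OF closed P that] C_S C_subset by blast
  qed
qed

section \<open>Transfinite recursion\<close>

lemma the_immediate_predecessor:
  fixes a b :: "'o::linorder"
  assumes "b < a" "\<forall>c. \<not> (b < c \<and> c < a)"
  shows "(THE b. b < a \<and> (\<forall>c. \<not> (b < c \<and> c < a))) = b"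
proof (rule the_equality)
  show "b < a \<and> (\<forall>c. \<not> (b < c \<and> c < a))" using assms by blast
  fix b' assume "b' < a \<and> (\<forall>c. \<not> (b' < c \<and> c < a))"
  then show "b' = b" using assms by (metis neq_iff)
qed

lemma transfinite_unfold:
  fixes a :: "'o::wellorder"
  shows "transfinite base step a = (if \<forall>b. \<not> b < a then base
     else if \<exists>b. b < a \<and> (\<forall>c. \<not> (b < c \<and> c < a))
       then step (transfinite base step (THE b. b < a \<and> (\<forall>c. \<not> (b < c \<and> c < a))))
     else (\<Inter>b \<in> {b. b < a}. transfinite base step b))"
proof -
  have "(THE b. b < a \<and> (\<forall>c. \<not> (b < c \<and> c < a))) < a"
    if ex: "\<exists>b. b < a \<and> (\<forall>c. \<not> (b < c \<and> c < a))"
  proof -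
    obtain b where "b < a" "\<forall>c. \<not> (b < c \<and> c < a)" using ex by blast
    then show ?thesis using the_immediate_predecessor[of b a] by simp
  qed
  then show ?thesis
    unfolding transfinite_def by (subst wfrec[OF wf]) (auto simp: cut_apply)
qed

lemma transfinite_induct2:
  fixes a :: "'o::wellorder"
  assumes base: "Q base1 base2"
    and step: "\<And>X Y. Q X Y \<Longrightarrow> Q (step1 X) (step2 Y)"
    and limit: "\<And>(B :: 'o set) X Y. B \<noteq> {} \<Longrightarrow> (\<And>b. b \<in> B \<Longrightarrow> Q (X b) (Y b)) \<Longrightarrow>
      Q (\<Inter>b\<in>B. X b) (\<Inter>b\<in>B. Y b)"
  shows "Q (transfinite base1 step1 a) (transfinite base2 step2 a)"
proof (induction a rule: less_induct)
  case (less a)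
  consider (zero) "\<forall>b. \<not> b < a"
    | (succ) b where "b < a" "\<forall>c. \<not> (b < c \<and> c < a)"
    | (lim) "\<exists>b. b < a" "\<not> (\<exists>b. b < a \<and> (\<forall>c. \<not> (b < c \<and> c < a)))"
    by blast
  then show ?case
  proof cases
    case zero
    then show ?thesis using base by (subst (1 2) transfinite_unfold) simp
  next
    case succ
    have "(THE b. b < a \<and> (\<forall>c. \<not> (b < c \<and> c < a))) = b"
      using the_immediate_predecessor[OF succ] .
    then show ?thesis
      using succ step[OF less.IH[OF succ(1)]] by (subst (1 2) transfinite_unfold) auto
  next
    case lim
    have "Q (\<Inter>b\<in>{b. b < a}. transfinite base1 step1 b) (\<Inter>b\<in>{b. b < a}. transfinite base2 step2 b)"
      using lim(1) less.IH by (intro limit) auto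
    moreover have "\<not> (\<forall>b. \<not> b < a)" using lim(1) by blast
    ultimately show ?thesis using lim(2) by (subst (1 2) transfinite_unfold) (simp only: if_False)
  qed
qed

theorem lemma5p4:
  fixes R :: "'k::field set" and \<alpha> :: "'o::wellorder"
  assumes "almost_Dedekind R" and "is_quotient_field_of R"
  shows "Crit_seq R \<alpha> \<subseteq> CB_deriv (max_inv R) \<alpha>"
proof -
  interpret almost_Dedekind_domain R using assms(1) by unfold_locales
  let ?Q = "\<lambda>C S. C \<subseteq> MaxSpec R \<and> inv_closed R C \<and> C \<subseteq> S"
  have "?Q (transfinite (MaxSpec R) (Crit_step R) \<alpha>) (CB_deriv (max_inv R) \<alpha>)"
    unfolding CB_deriv_def
  proof (rule transfinite_induct2)
    show "?Q (MaxSpec R) (topspace (max_inv R))"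
      using topspace_max_inv[OF subring] unfolding inv_closed_def by blast
  next
    fix C S assume IH: "?Q C S"
    interpret localization_intersection R C using IH by unfold_locales blast
    show "?Q (Crit_step R C) (subtopology (max_inv R) S derived_set_of topspace (subtopology (max_inv R) S))"
      using inv_closed_Crit_step Crit_step_subset_derived IH unfolding Crit_step_def by blast
  next
    fix B :: "'o set" and X Y assume "B \<noteq> {}" "\<And>b. b \<in> B \<Longrightarrow> ?Q (X b) (Y b)"
    then show "?Q (\<Inter>b\<in>B. X b) (\<Inter>b\<in>B. Y b)" using inv_closed_INT[of B R X] by blast
  qed
  moreover have "Crit_seq R \<alpha> = transfinite (MaxSpec R) (Crit_step R) \<alpha>"
    unfolding Crit_seq_def Crit_step_def ..
  ultimately show ?thesis by simp
qed

end
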